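(* $|\mathrm{GHZ}\rangle^{\otimes 3}\stackrel{\textrm{SLOCC}}{\longrightarrow}|W\rangle^{\otimes 2}$, where $|\mathrm{GHZ}\rangle=\frac{1}{\sqrt2}(|000\rangle+|111\rangle)$ and $|W\rangle=\frac{1}{\sqrt3}(|001\rangle+|010\rangle+|100\rangle)$ are three-qubit states shared by parties $A,B,C$ (in each ket the first qubit belongs to $A$, the second to $B$, the third to $C$), and tensor powers are taken with each party holding its own qubits from all copies.
   Context: For tripartite states, $|\psi\rangle\stackrel{\textrm{SLOCC}}{\longrightarrow}|\phi\rangle$ means that $|\psi\rangle$ can be transformed into $|\phi\rangle$ with nonzero success probability by local operations of the three parties and classical communication; equivalently, there exist linear operators $A,B,C$ on the respective parties' spaces with $(A\otimes B\otimes C)|\psi\rangle=|\phi\rangle$ up to a nonzero scalar. *)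

theory Defs
  imports Complex_Main
begin

text \<open>A tripartite pure state with local dimensions dA, dB, dC is represented by
its coefficient tensor  psi a b c  (for a < dA, b < dB, c < dC) in the
computational basis; coefficients outside the index range are irrelevant.\<close>

type_synonym tri_state = "nat \<Rightarrow> nat \<Rightarrow> nat \<Rightarrow> complex"

text \<open>A local linear operator from C^d to C^d' is a matrix  M i a  (i < d', a < d).
SLOCC convertibility: there are operators A, B, C and a nonzero scalar s with
(A \<otimes> B \<otimes> C) psi = s * phi.\<close>

definition slocc ::
  "nat \<Rightarrow> nat \<Rightarrow> nat \<Rightarrow> tri_state \<Rightarrow> nat \<Rightarrow> nat \<Rightarrow> nat \<Rightarrow> tri_state \<Rightarrow> bool" where
  "slocc dA dB dC psi dA' dB' dC' phi \<longleftrightarrow>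
     (\<exists>(A::nat \<Rightarrow> nat \<Rightarrow> complex) (B::nat \<Rightarrow> nat \<Rightarrow> complex) (C::nat \<Rightarrow> nat \<Rightarrow> complex) (s::complex).
        s \<noteq> 0 \<and>
        (\<forall>i<dA'. \<forall>j<dB'. \<forall>k<dC'.
           (\<Sum>a<dA. \<Sum>b<dB. \<Sum>c<dC. A i a * B j b * C k c * psi a b c) = s * phi i j k))"

definition ghz :: tri_state where
  "ghz a b c = (if (a, b, c) = (0, 0, 0) \<or> (a, b, c) = (1, 1, 1)
                then complex_of_real (1 / sqrt 2) else 0)"

definition wst :: tri_state where
  "wst a b c = (if (a, b, c) = (0, 0, 1) \<or> (a, b, c) = (0, 1, 0) \<or> (a, b, c) = (1, 0, 0)
                then complex_of_real (1 / sqrt 3) else 0)"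

text \<open>n-fold tensor power of a three-qubit state, each party holding its n qubits;
party index x < 2^n encodes the party's qubit of copy k as bit k of x.\<close>

definition qbit :: "nat \<Rightarrow> nat \<Rightarrow> nat" where
  "qbit k x = x div 2 ^ k mod 2"

definition tpow :: "nat \<Rightarrow> tri_state \<Rightarrow> tri_state" where
  "tpow n psi a b c = (\<Prod>k<n. psi (qbit k a) (qbit k b) (qbit k c))"

end

theory Submission
  imports Defs
begin

text \<open>Since GHZ is, up to the scalar 1/sqrt 2, the diagonal tensor of size 2, its third
tensor power is a multiple of the diagonal tensor of size 8. Local operators applied to a
diagonal tensor of size d produce exactly the tensors of rank at most d: the r-th columns
of the three operators become the r-th product term. So it suffices to write W \<otimes> W as a
sum of 8 product tensors.\<close>

lemma qbit_less_2: "qbit k x < 2"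
  by (simp add: qbit_def)

lemma qbit_Suc_div_2: "qbit (Suc k) x = qbit k (x div 2)"
  by (simp add: qbit_def div_mult2_eq)

lemma eq_if_qbits_eq:
  assumes "a < 2 ^ n" "b < 2 ^ n" "\<forall>k<n. qbit k a = qbit k b"
  shows "a = b"
  using assms
proof (induction n arbitrary: a b)
  case 0
  then show ?case by simp
next
  case (Suc n)
  have "a div 2 = b div 2"
    using Suc.prems by (intro Suc.IH) (auto simp flip: qbit_Suc_div_2)
  moreover have "a mod 2 = b mod 2"
    using Suc.prems(3) by (auto simp: qbit_def)
  ultimately show ?case
    by (metis div_mult_mod_eq)
qed

lemma tpow_diagonal:
  assumes psi: "\<forall>x<2. \<forall>y<2. \<forall>z<2. psi x y z = (if x = y \<and> y = z then h else 0)"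
    and "a < 2 ^ n" "b < 2 ^ n" "c < 2 ^ n"
  shows "tpow n psi a b c = (if a = b \<and> b = c then h ^ n else 0)"
proof -
  have "tpow n psi a b c = (\<Prod>k<n. if qbit k a = qbit k b \<and> qbit k b = qbit k c then h else 0)"
    unfolding tpow_def using psi by (intro prod.cong) (simp_all add: qbit_less_2)
  also have "\<dots> = (if a = b \<and> b = c then h ^ n else 0)"
  proof (cases "a = b \<and> b = c")
    case False
    then obtain k where "k < n" "\<not> (qbit k a = qbit k b \<and> qbit k b = qbit k c)"
      using eq_if_qbits_eq assms(2-4) by blast
    then show ?thesis
      using False by (intro trans[OF prod_zero]) auto
  qed simp
  finally show ?thesis .
qed

lemma slocc_from_diagonal:
  assumes psi: "\<forall>a<d. \<forall>b<d. \<forall>c<d. psi a b c = (if a = b \<and> b = c then h else 0)"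
    and decomp: "\<forall>i<dA. \<forall>j<dB. \<forall>k<dC. (\<Sum>r<d. X i r * Y j r * Z k r) = s * phi i j k"
    and "h \<noteq> 0" "s \<noteq> 0"
  shows "slocc d d d psi dA dB dC phi"
  unfolding slocc_def
proof (intro exI conjI allI impI)
  show "h * s \<noteq> 0" using assms(3,4) by simp
  fix i j k assume ijk: "i < dA" "j < dB" "k < dC"
  have "X i a * Y j b * Z k c * psi a b c
      = (if b = a then if c = a then h * (X i a * Y j a * Z k a) else 0 else 0)"
    if "a < d" "b < d" "c < d" for a b c
    using psi that by simp
  then have "(\<Sum>a<d. \<Sum>b<d. \<Sum>c<d. X i a * Y j b * Z k c * psi a b c)
      = (\<Sum>a<d. \<Sum>b<d. \<Sum>c<d. if b = a then if c = a then h * (X i a * Y j a * Z k a) else 0 else 0)"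
    by (intro sum.cong refl) simp
  also have "\<dots> = (\<Sum>a<d. h * (X i a * Y j a * Z k a))"
    by (intro sum.cong refl) (simp add: sum.If_cases)
  also have "\<dots> = h * (\<Sum>r<d. X i r * Y j r * Z k r)"
    by (simp add: sum_distrib_left)
  also have "\<dots> = h * s * phi i j k"
    using decomp ijk by simp
  finally show "(\<Sum>a<d. \<Sum>b<d. \<Sum>c<d. X i a * Y j b * Z k c * psi a b c) = h * s * phi i j k" .
qed

lemma ghz_diagonal:
  "\<forall>x<2. \<forall>y<2. \<forall>z<2. ghz x y z = (if x = y \<and> y = z then complex_of_real (1 / sqrt 2) else 0)"
  by (auto simp: ghz_def less_2_cases_iff)

text \<open>A rank-8 decomposition of W \<otimes> W: a party's index i < 4 carries its qubit of the
first copy in bit 0 and of the second copy in bit 1, and 3 \<cdot> W \<otimes> W is the sum over r of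
x r \<otimes> x r \<otimes> z r, where x r and z r are the r-th rows of the two tables below.\<close>

definition w2_factor_AB :: "nat \<Rightarrow> nat \<Rightarrow> complex" where
  "w2_factor_AB i r = of_int ([[1,0,0,0], [1,1,0,0], [1,0,1,0], [0,1,0,0],
                               [0,0,1,0], [0,1,1,0], [1,0,0,1], [0,0,0,1]] ! r ! i)"

definition w2_factor_C :: "nat \<Rightarrow> nat \<Rightarrow> complex" where
  "w2_factor_C k r = of_int ([[-1,-1,-1,1], [0,0,1,0], [0,1,0,0], [-1,0,-1,0],
                              [-1,-1,0,0], [1,0,0,0], [1,0,0,0], [-1,0,0,0]] ! r ! k)"

lemma w2_decomposition:
  assumes "i < 4" "j < 4" "k < 4"
  shows "(\<Sum>r<8. w2_factor_AB i r * w2_factor_AB j r * w2_factor_C k r) = 3 * tpow 2 wst i j k"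
proof -
  have "i \<in> {0,1,2,3}" "j \<in> {0,1,2,3}" "k \<in> {0,1,2,3}"
    using assms by auto
  then show ?thesis
    unfolding tpow_def qbit_def
    by (auto simp only: insert_iff empty_iff)
      (simp_all add: lessThan_nat_numeral w2_factor_AB_def w2_factor_C_def wst_def
        flip: of_real_mult)
qed

theorem theorem1:
  shows "slocc (2^3) (2^3) (2^3) (tpow 3 ghz) (2^2) (2^2) (2^2) (tpow 2 wst)"
proof (rule slocc_from_diagonal[where h = "complex_of_real (1 / sqrt 2) ^ 3" and s = 3
      and X = w2_factor_AB and Y = w2_factor_AB and Z = w2_factor_C])
  show "\<forall>a<2^3. \<forall>b<2^3. \<forall>c<2^3.
      tpow 3 ghz a b c = (if a = b \<and> b = c then complex_of_real (1 / sqrt 2) ^ 3 else 0)"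
    using tpow_diagonal[OF ghz_diagonal] by blast
  show "\<forall>i<2^2. \<forall>j<2^2. \<forall>k<2^2.
      (\<Sum>r<2^3. w2_factor_AB i r * w2_factor_AB j r * w2_factor_C k r) = 3 * tpow 2 wst i j k"
    using w2_decomposition by simp
qed simp_all

end
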